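(* Let $r\ge 2$ and $t\ge1$ be integers and let $m$ be a positive integer with $t\le 2^m-1$. Let $\mathcal C_t^{(m)}$ be the binary linear code, with coordinates indexed by $\Omega_t^{(m)}$, having parity-check matrix $H_t^{(m)}$. Then $\mathcal C_t^{(m)}$ is an $(n,k,r,t)$-SLRC with $$n=r^m\sum_{s=0}^t\frac{1}{r^{|\mathrm{supp}_m(s)|}},\qquad k=r^m,$$ so that its rate is $\frac{k}{n}=\Big(\sum_{s=0}^t r^{-|\mathrm{supp}_m(s)|}\Big)^{-1}$.
   Context: Let $\mathbb Z_r=\{0,1,\dots,r-1\}$ and $\mathbb Z_{r+1}=\{0,1,\dots,r\}$, regarded merely as sets (so $\mathbb Z_r\subseteq\mathbb Z_{r+1}$). Elements of $\mathbb Z_{r+1}^m$ are written $\alpha=(i_m,i_{m-1},\dots,i_1)$; $i_\ell$ is the $\ell$-th coordinate from the right. Define $\mathbf U(\alpha)=\{\ell\in[m]: i_\ell=r\}$, $\mathbf T(\alpha)=\{\ell\in[m]: i_\ell\in\mathbb Z_r\}$ and $\mathcal L(\alpha)=\{(j_m,\dots,j_1)\in\mathbb Z_r^m: j_\ell=i_\ell \text{ for all }\ell\in\mathbf T(\alpha)\}$. For an integer $0\le s\le 2^m-1$ write $s=\sum_{\ell=1}^m\lambda_\ell2^{\ell-1}$ with $\lambda_\ell\in\{0,1\}$ and set $\mathrm{supp}_m(s)=\{\ell:\lambda_\ell=1\}$. Let $\Gamma_s^{(m)}=\{\alpha\in\mathbb Z_{r+1}^m:\mathbf U(\alpha)=\mathrm{supp}_m(s)\}$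 and $\Omega_s^{(m)}=\bigcup_{\ell=0}^s\Gamma_\ell^{(m)}$ (so $\Omega_0^{(m)}=\mathbb Z_r^m$). $H_t^{(m)}=(h_{\alpha,\beta})$ is the binary matrix with rows indexed by $\Omega_t^{(m)}\setminus\Omega_0^{(m)}$, columns indexed by $\Omega_t^{(m)}$, and $h_{\alpha,\beta}=1$ if $\beta\in\mathcal L(\alpha)\cup\{\alpha\}$, $h_{\alpha,\beta}=0$ otherwise. For a linear code $\mathcal C$ of length $n$ over a field $\mathbb F$ with coordinate set $I$ ($|I|=n$), a recovering set of a coordinate $i$ is a set $R\subseteq I\setminus\{i\}$ such that there are nonzero $a_j\in\mathbb F$ ($j\in R$) with $x_i=\sum_{j\in R}a_jx_j$ for all codewords $x$. $\mathcal C$ (of dimension $k$) is an $(n,k,r,t)$-SLRC if for every $E\subseteq I$ with $|E|\le t$, $E$ can be indexed as $\{i_1,\dots,i_{|E|}\}$ such that each $i_\ell$ has a recovering set $R_\ell\subseteq(I\setminus E)\cup\{i_1,\dots,i_{\ell-1}\}$ with $|R_\ell|\le r$. *)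

theory Defs
  imports Complex_Main "HOL-Library.Z2" "HOL-Library.Function_Algebras"
begin

text \<open>Words over a field F with coordinates in I are functions I => F (extended by 0
  outside I). Scalar multiplication is coordinatewise.\<close>

definition wscale :: "'f::field \<Rightarrow> ('i \<Rightarrow> 'f) \<Rightarrow> ('i \<Rightarrow> 'f)" where
  "wscale c x = (\<lambda>i. c * x i)"

definition words :: "'i set \<Rightarrow> ('i \<Rightarrow> 'f::field) set" where
  "words I = {x. \<forall>i. i \<notin> I \<longrightarrow> x i = 0}"

definition linear_code :: "'i set \<Rightarrow> ('i \<Rightarrow> 'f::field) set \<Rightarrow> bool" where
  "linear_code I C \<longleftrightarrow> finite I \<and> C \<subseteq> words I \<and> module.subspace wscale C"

definition code_dim :: "('i \<Rightarrow> 'f::field) set \<Rightarrow> nat" where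
  "code_dim C = vector_space.dim wscale C"

definition recovering_set ::
  "'i set \<Rightarrow> ('i \<Rightarrow> 'f::field) set \<Rightarrow> 'i \<Rightarrow> 'i set \<Rightarrow> bool" where
  "recovering_set I C i R \<longleftrightarrow> R \<subseteq> I - {i} \<and>
     (\<exists>a :: 'i \<Rightarrow> 'f. (\<forall>j\<in>R. a j \<noteq> 0) \<and> (\<forall>x\<in>C. x i = (\<Sum>j\<in>R. a j * x j)))"

definition is_SLRC ::
  "'i set \<Rightarrow> ('i \<Rightarrow> 'f::field) set \<Rightarrow> nat \<Rightarrow> nat \<Rightarrow> nat \<Rightarrow> nat \<Rightarrow> bool" where
  "is_SLRC I C n k r t \<longleftrightarrow> linear_code I C \<and> card I = n \<and> code_dim C = k \<and>
     (\<forall>E. E \<subseteq> I \<and> card E \<le> t \<longrightarrow>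
        (\<exists>e. distinct e \<and> set e = E \<and>
           (\<forall>l < length e. \<exists>R. recovering_set I C (e ! l) R \<and>
               R \<subseteq> (I - E) \<union> set (take l e) \<and> card R \<le> r)))"

text \<open>Vectors alpha = (i_m,...,i_1) in Z_q^m are functions nat => nat with
  alpha l = i_l for l in {1..m} (values < q) and alpha l = 0 otherwise.\<close>

definition Zvec :: "nat \<Rightarrow> nat \<Rightarrow> (nat \<Rightarrow> nat) set" where
  "Zvec m q = {\<alpha>. (\<forall>l\<in>{1..m}. \<alpha> l < q) \<and> (\<forall>l. l \<notin> {1..m} \<longrightarrow> \<alpha> l = 0)}"

definition Uset :: "nat \<Rightarrow> nat \<Rightarrow> (nat \<Rightarrow> nat) \<Rightarrow> nat set" where
  "Uset m r \<alpha> = {l\<in>{1..m}. \<alpha> l = r}"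

definition Tset :: "nat \<Rightarrow> nat \<Rightarrow> (nat \<Rightarrow> nat) \<Rightarrow> nat set" where
  "Tset m r \<alpha> = {l\<in>{1..m}. \<alpha> l < r}"

definition Lset :: "nat \<Rightarrow> nat \<Rightarrow> (nat \<Rightarrow> nat) \<Rightarrow> (nat \<Rightarrow> nat) set" where
  "Lset m r \<alpha> = {\<beta>\<in>Zvec m r. \<forall>l\<in>Tset m r \<alpha>. \<beta> l = \<alpha> l}"

text \<open>supp_m(s): positions l in {1..m} of the 1-bits lambda_l of s = sum lambda_l 2^(l-1).\<close>
definition supp :: "nat \<Rightarrow> nat \<Rightarrow> nat set" where
  "supp m s = {l\<in>{1..m}. odd (s div 2 ^ (l - 1))}"

definition Gamma :: "nat \<Rightarrow> nat \<Rightarrow> nat \<Rightarrow> (nat \<Rightarrow> nat) set" where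
  "Gamma m r s = {\<alpha>\<in>Zvec m (r + 1). Uset m r \<alpha> = supp m s}"

definition Omega :: "nat \<Rightarrow> nat \<Rightarrow> nat \<Rightarrow> (nat \<Rightarrow> nat) set" where
  "Omega m r s = (\<Union>l\<in>{0..s}. Gamma m r l)"

text \<open>Entries of H_t^(m): row alpha in Omega_t - Omega_0, column beta in Omega_t.\<close>
definition Hmat :: "nat \<Rightarrow> nat \<Rightarrow> (nat \<Rightarrow> nat) \<Rightarrow> (nat \<Rightarrow> nat) \<Rightarrow> bit" where
  "Hmat m r \<alpha> \<beta> = (if \<beta> \<in> Lset m r \<alpha> \<union> {\<alpha>} then 1 else 0)"

definition Ccode :: "nat \<Rightarrow> nat \<Rightarrow> nat \<Rightarrow> ((nat \<Rightarrow> nat) \<Rightarrow> bit) set" where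
  "Ccode m r t = {x \<in> words (Omega m r t).
     \<forall>\<alpha> \<in> Omega m r t - Omega m r 0. (\<Sum>\<beta>\<in>Omega m r t. Hmat m r \<alpha> \<beta> * x \<beta>) = 0}"

end

theory Submission
  imports Defs "HOL-Library.FuncSet"
begin

text \<open>
  The parity checks say that x(\<alpha>) is the sum of x over L(\<alpha>) for every \<alpha> in \<Omega>_t, so a
  codeword is determined by, and can be freely prescribed on, Z_r^m; hence k = r^m, while
  n = |\<Omega>_t| is the sum of the sizes r^(m - |supp(s)|) of the \<Gamma>_s.

  Let \<alpha> \<in> \<Omega>_t and let d be a direction such that U(\<alpha>) \<union> {d} is still the support of
  some s \<le> t. Then the line through \<alpha> in direction d (vary the d-th coordinate over
  0..r) lies in \<Omega>_t, and its coordinates sum to zero in every codeword, because L of its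
  top point splits into the sets L of its other points. So the line minus \<alpha> is a
  recovering set of size r.

  An erasure pattern E with 0 < |E| \<le> t always contains some \<alpha> with such a line meeting
  E only in \<alpha>: otherwise, starting from an \<alpha>0 \<in> E whose U-set has minimal index (which
  forces U(\<alpha>0) = {}), walking along lines inside E produces for every s \<le> t an element
  of E differing from \<alpha>0 exactly on supp(s), whence |E| > t. Recovering this \<alpha> first
  and recursing on E - {\<alpha>} gives sequential recovery.
\<close>

section \<open>Binary supports\<close>

definition supp_inv :: "nat set \<Rightarrow> nat" where
  "supp_inv S = (\<Sum>l\<in>S. 2 ^ (l - 1))"

lemma supp_inv_insert: "finite S \<Longrightarrow> l \<notin> S \<Longrightarrow> supp_inv (insert l S) = 2 ^ (l - 1) + supp_inv S"
  by (simp add: supp_inv_def)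

lemma supp_inv_mono: "finite T \<Longrightarrow> S \<subseteq> T \<Longrightarrow> supp_inv S \<le> supp_inv T"
  unfolding supp_inv_def by (rule sum_mono2) auto

lemma bit_supp_inv: "finite S \<Longrightarrow> 0 \<notin> S \<Longrightarrow> bit (supp_inv S) n \<longleftrightarrow> Suc n \<in> S"
proof (induction S arbitrary: n rule: finite_induct)
  case empty
  then show ?case by (simp add: supp_inv_def)
next
  case (insert l S)
  have disjoint: "\<And>k. \<not> bit ((2::nat) ^ (l - 1)) k \<or> \<not> bit (supp_inv S) k"
    using insert by (auto simp: bit_exp_iff)
  have "bit (supp_inv (insert l S)) n \<longleftrightarrow> bit ((2::nat) ^ (l - 1)) n \<or> bit (supp_inv S) n"
    unfolding supp_inv_insert[OF insert(1,2)] by (rule bit_disjunctive_add_iff[OF disjoint])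
  also have "\<dots> \<longleftrightarrow> Suc n \<in> insert l S"
    using insert by (auto simp: bit_exp_iff)
  finally show ?case .
qed

lemma supp_eq_bit: "supp m s = {l\<in>{1..m}. bit s (l - 1)}"
  by (simp add: supp_def bit_iff_odd)

lemma supp_subset: "supp m s \<subseteq> {1..m}"
  by (auto simp: supp_def)

lemma finite_supp: "finite (supp m s)"
  using finite_subset[OF supp_subset] by blast

lemma supp_supp_inv:
  assumes "S \<subseteq> {1..m}"
  shows "supp m (supp_inv S) = S"
proof -
  have "finite S" "0 \<notin> S"
    using assms finite_subset by auto
  then show ?thesis
    using assms by (auto simp: supp_eq_bit bit_supp_inv Suc_diff_1)
qed

lemma supp_inv_supp:
  assumes "s < 2 ^ m"
  shows "supp_inv (supp m s) = s"
proof (rule bit_eqI)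
  fix n
  have "n < m" if "bit s n"
  proof (rule ccontr)
    assume "\<not> n < m"
    then have "s < 2 ^ n"
      using assms power_increasing[of m n "2::nat"] by linarith
    then show False
      using \<open>bit s n\<close> by (simp add: bit_iff_odd)
  qed
  then show "bit (supp_inv (supp m s)) n \<longleftrightarrow> bit s n"
    using finite_supp supp_subset by (auto simp: bit_supp_inv supp_eq_bit)
qed

lemma inj_on_supp: "inj_on (supp m) {..<2 ^ m}"
  by (rule inj_on_inverseI[of _ supp_inv]) (simp add: supp_inv_supp)

lemma
  fixes B :: "'a \<Rightarrow> 'b set" and z :: 'b
  assumes "finite A" and "\<And>l. l \<in> A \<Longrightarrow> finite (B l)"
  shows finite_funs_const_outside: "finite {f. (\<forall>l\<in>A. f l \<in> B l) \<and> (\<forall>l. l \<notin> A \<longrightarrow> f l = z)}"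
    and card_funs_const_outside:
      "card {f. (\<forall>l\<in>A. f l \<in> B l) \<and> (\<forall>l. l \<notin> A \<longrightarrow> f l = z)} = (\<Prod>l\<in>A. card (B l))"
proof -
  let ?F = "{f. (\<forall>l\<in>A. f l \<in> B l) \<and> (\<forall>l. l \<notin> A \<longrightarrow> f l = z)}"
  let ?ext = "\<lambda>g l. if l \<in> A then g l else z"
  have F_eq: "?F = ?ext ` PiE A B"
  proof
    show "?F \<subseteq> ?ext ` PiE A B"
    proof
      fix f assume "f \<in> ?F"
      then have "f = ?ext (restrict f A)" and "restrict f A \<in> PiE A B"
        by (auto simp: fun_eq_iff)
      then show "f \<in> ?ext ` PiE A B" by blast
    qed
  qed (auto simp: PiE_def Pi_def)
  have "inj_on ?ext (PiE A B)"
    by (rule inj_onI, rule PiE_ext, assumption+) (metis)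
  then show "card ?F = (\<Prod>l\<in>A. card (B l))"
    unfolding F_eq using assms by (simp add: card_image card_PiE)
  show "finite ?F"
    unfolding F_eq using assms by (intro finite_imageI finite_PiE) auto
qed

lemma Zvec_eq_funs: "Zvec m q = {\<alpha>. (\<forall>l\<in>{1..m}. \<alpha> l \<in> {..<q}) \<and> (\<forall>l. l \<notin> {1..m} \<longrightarrow> \<alpha> l = 0)}"
  by (auto simp: Zvec_def)

lemma finite_Zvec: "finite (Zvec m q)"
  unfolding Zvec_eq_funs by (rule finite_funs_const_outside) auto

lemma card_Zvec: "card (Zvec m q) = q ^ m"
  unfolding Zvec_eq_funs by (subst card_funs_const_outside) auto

lemma Gamma_eq_funs:
  "Gamma m r s = {\<alpha>. (\<forall>l\<in>{1..m}. \<alpha> l \<in> (if l \<in> supp m s then {r} else {..<r})) \<and>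
                     (\<forall>l. l \<notin> {1..m} \<longrightarrow> \<alpha> l = 0)}"
proof -
  have "Uset m r \<alpha> = supp m s \<longleftrightarrow> (\<forall>l\<in>{1..m}. \<alpha> l = r \<longleftrightarrow> l \<in> supp m s)" for \<alpha>
    using supp_subset[of m s] by (auto simp: Uset_def)
  moreover have "\<alpha> l \<in> (if l \<in> supp m s then {r} else {..<r}) \<longleftrightarrow>
      \<alpha> l < r + 1 \<and> (\<alpha> l = r \<longleftrightarrow> l \<in> supp m s)" for \<alpha> l
    by auto
  ultimately show ?thesis
    unfolding Gamma_def Zvec_def by blast
qed

lemma finite_Gamma: "finite (Gamma m r s)"
  unfolding Gamma_eq_funs by (rule finite_funs_const_outside) auto

lemma card_Gamma: "card (Gamma m r s) = r ^ (m - card (supp m s))"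
proof -
  have "card (Gamma m r s) = (\<Prod>l\<in>{1..m}. if l \<in> supp m s then 1 else r)"
    unfolding Gamma_eq_funs by (subst card_funs_const_outside) (auto intro: prod.cong)
  also have "\<dots> = r ^ card ({1..m} - supp m s)"
    by (simp add: prod.If_cases Diff_eq)
  also have "card ({1..m} - supp m s) = m - card (supp m s)"
    using supp_subset finite_supp by (simp add: card_Diff_subset)
  finally show ?thesis .
qed

lemma card_Omega:
  assumes "t < 2 ^ m"
  shows "card (Omega m r t) = (\<Sum>s=0..t. r ^ (m - card (supp m s)))"
proof -
  have "supp m i \<noteq> supp m j" if "i \<le> t" "j \<le> t" "i \<noteq> j" for i j
    using that assms inj_onD[OF inj_on_supp[of m], of i j] by fastforce
  then have "card (Omega m r t) = (\<Sum>s=0..t. card (Gamma m r s))"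
    unfolding Omega_def using finite_Gamma by (intro card_UN_disjoint) (auto simp: Gamma_def)
  then show ?thesis
    by (simp add: card_Gamma)
qed

lemma Uset_subset: "Uset m r \<alpha> \<subseteq> {1..m}"
  by (auto simp: Uset_def)

lemma finite_Uset: "finite (Uset m r \<alpha>)"
  using finite_subset[OF Uset_subset] by blast

lemma Omega_eq_supp_inv_le:
  assumes "t < 2 ^ m"
  shows "Omega m r t = {\<alpha> \<in> Zvec m (r + 1). supp_inv (Uset m r \<alpha>) \<le> t}"
proof (intro equalityI subsetI)
  fix \<alpha> assume "\<alpha> \<in> Omega m r t"
  then obtain s where "s \<le> t" "\<alpha> \<in> Zvec m (r + 1)" "Uset m r \<alpha> = supp m s"
    by (auto simp: Omega_def Gamma_def)
  then show "\<alpha> \<in> {\<alpha> \<in> Zvec m (r + 1). supp_inv (Uset m r \<alpha>) \<le> t}"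
    using assms supp_inv_supp[of s m] by simp
next
  fix \<alpha> assume "\<alpha> \<in> {\<alpha> \<in> Zvec m (r + 1). supp_inv (Uset m r \<alpha>) \<le> t}"
  then show "\<alpha> \<in> Omega m r t"
    using supp_supp_inv[OF Uset_subset] unfolding Omega_def Gamma_def by force
qed

lemma finite_Omega: "finite (Omega m r t)"
  unfolding Omega_def Gamma_def using finite_Zvec by auto

lemma Omega_0: "Omega m r 0 = Zvec m r"
proof -
  have "supp m 0 = {}" by (simp add: supp_def)
  then show ?thesis
    by (auto simp: Omega_def Gamma_def Uset_def Zvec_def less_Suc_eq)
qed

lemma Zvec_subset_Omega: "Zvec m r \<subseteq> Omega m r t"
  unfolding Omega_0[symmetric] Omega_def by auto

lemma Lset_subset: "Lset m r \<alpha> \<subseteq> Zvec m r"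
  by (auto simp: Lset_def)

lemma finite_Lset: "finite (Lset m r \<alpha>)"
  using finite_subset[OF Lset_subset finite_Zvec] .

lemma Lset_Zvec: "\<alpha> \<in> Zvec m r \<Longrightarrow> Lset m r \<alpha> = {\<alpha>}"
  by (auto simp: Lset_def Tset_def Zvec_def fun_eq_iff) (metis atLeastAtMost_iff)

lemma bit_eq_iff_add_eq_0: "(a::bit) = b \<longleftrightarrow> a + b = 0"
  by (cases a; cases b) simp_all

text \<open>Keep field arithmetic on bit visible to the simplifier instead of bitwise XOR/AND.\<close>
declare add_bit_eq_xor[simp del] mult_bit_eq_and[simp del]

lemma Hmat_row_sum:
  assumes "\<alpha> \<in> Omega m r t - Omega m r 0"
  shows "(\<Sum>\<beta>\<in>Omega m r t. Hmat m r \<alpha> \<beta> * x \<beta>) = x \<alpha> + (\<Sum>\<beta>\<in>Lset m r \<alpha>. x \<beta>)"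
proof -
  have row: "Omega m r t \<inter> (Lset m r \<alpha> \<union> {\<alpha>}) = insert \<alpha> (Lset m r \<alpha>)"
    using assms Lset_subset[of m r \<alpha>] Zvec_subset_Omega[of m r t] by auto
  have "(\<Sum>\<beta>\<in>Omega m r t. Hmat m r \<alpha> \<beta> * x \<beta>)
      = (\<Sum>\<beta>\<in>Omega m r t \<inter> (Lset m r \<alpha> \<union> {\<alpha>}). x \<beta>)"
    unfolding sum.inter_restrict[OF finite_Omega] by (rule sum.cong) (auto simp: Hmat_def)
  also have "\<dots> = x \<alpha> + (\<Sum>\<beta>\<in>Lset m r \<alpha>. x \<beta>)"
    unfolding row using assms Lset_subset[of m r \<alpha>] Omega_0[of m r] finite_Lset
    by (subst sum.insert) auto
  finally show ?thesis .
qed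

lemma Ccode_iff:
  "x \<in> Ccode m r t \<longleftrightarrow> x \<in> words (Omega m r t) \<and>
     (\<forall>\<alpha>\<in>Omega m r t. x \<alpha> = (\<Sum>\<beta>\<in>Lset m r \<alpha>. x \<beta>))"
proof -
  have "(\<Sum>\<beta>\<in>Omega m r t. Hmat m r \<alpha> \<beta> * x \<beta>) = 0 \<longleftrightarrow> x \<alpha> = (\<Sum>\<beta>\<in>Lset m r \<alpha>. x \<beta>)"
    if "\<alpha> \<in> Omega m r t - Omega m r 0" for \<alpha>
    by (simp add: Hmat_row_sum[OF that] bit_eq_iff_add_eq_0[of "x \<alpha>"])
  moreover have "x \<alpha> = (\<Sum>\<beta>\<in>Lset m r \<alpha>. x \<beta>)" if "\<alpha> \<in> Omega m r 0" for \<alpha>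
    using that Lset_Zvec Omega_0 by simp
  ultimately show ?thesis
    unfolding Ccode_def by blast
qed

section \<open>The dimension\<close>

interpretation words: vector_space "wscale :: 'f::field \<Rightarrow> ('i \<Rightarrow> 'f) \<Rightarrow> ('i \<Rightarrow> 'f)"
  by unfold_locales (simp_all add: wscale_def fun_eq_iff algebra_simps)

lemma sum_fun_apply: "(\<Sum>v\<in>A. f v) x = (\<Sum>v\<in>A. f v x)"
  by (induction A rule: infinite_finite_induct) auto

lemma Ccode_subspace: "words.subspace (Ccode m r t)"
  by (rule words.subspaceI)
    (auto simp: Ccode_iff words_def wscale_def sum.distrib sum_distrib_left)

text \<open>The codeword that restricts to the unit vector at \<gamma> on the information set Z_r^m.\<close>
definition info_codeword :: "nat \<Rightarrow> nat \<Rightarrow> nat \<Rightarrow> (nat \<Rightarrow> nat) \<Rightarrow> (nat \<Rightarrow> nat) \<Rightarrow> bit" where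
  "info_codeword m r t \<gamma> = (\<lambda>\<beta>. if \<beta> \<in> Omega m r t \<and> \<gamma> \<in> Lset m r \<beta> then 1 else 0)"

lemma info_codeword_Zvec:
  "\<gamma>' \<in> Zvec m r \<Longrightarrow> info_codeword m r t \<gamma> \<gamma>' = (if \<gamma> = \<gamma>' then 1 else 0)"
  using Zvec_subset_Omega[of m r t] Lset_Zvec[of \<gamma>' m r] by (auto simp: info_codeword_def)

lemma inj_on_info_codeword: "inj_on (info_codeword m r t) (Zvec m r)"
  by (rule inj_onI) (metis info_codeword_Zvec one_neq_zero)

lemma info_codeword_in_Ccode:
  assumes "\<gamma> \<in> Zvec m r"
  shows "info_codeword m r t \<gamma> \<in> Ccode m r t"
  unfolding Ccode_iff
proof (intro conjI ballI)
  show "info_codeword m r t \<gamma> \<in> words (Omega m r t)"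
    by (simp add: words_def info_codeword_def)
next
  fix \<alpha> assume "\<alpha> \<in> Omega m r t"
  have "(\<Sum>\<beta>\<in>Lset m r \<alpha>. info_codeword m r t \<gamma> \<beta>) = (\<Sum>\<beta>\<in>Lset m r \<alpha>. if \<gamma> = \<beta> then 1 else 0)"
    using Lset_subset info_codeword_Zvec by (intro sum.cong) blast+
  also have "\<dots> = info_codeword m r t \<gamma> \<alpha>"
    using \<open>\<alpha> \<in> Omega m r t\<close> finite_Lset by (simp add: info_codeword_def)
  finally show "info_codeword m r t \<gamma> \<alpha> = (\<Sum>\<beta>\<in>Lset m r \<alpha>. info_codeword m r t \<gamma> \<beta>)" ..
qed

lemma Ccode_eq_info_combination:
  assumes "x \<in> Ccode m r t"
  shows "x = (\<Sum>\<gamma>\<in>Zvec m r. wscale (x \<gamma>) (info_codeword m r t \<gamma>))"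
proof
  fix \<beta>
  have "(\<Sum>\<gamma>\<in>Zvec m r. x \<gamma> * info_codeword m r t \<gamma> \<beta>) = x \<beta>"
  proof (cases "\<beta> \<in> Omega m r t")
    case True
    have "(\<Sum>\<gamma>\<in>Zvec m r. x \<gamma> * info_codeword m r t \<gamma> \<beta>)
        = (\<Sum>\<gamma>\<in>Zvec m r. if \<gamma> \<in> Lset m r \<beta> then x \<gamma> else 0)"
      using True by (intro sum.cong) (auto simp: info_codeword_def)
    also have "\<dots> = (\<Sum>\<gamma>\<in>Zvec m r \<inter> Lset m r \<beta>. x \<gamma>)"
      by (rule sum.inter_restrict[OF finite_Zvec, symmetric])
    also have "Zvec m r \<inter> Lset m r \<beta> = Lset m r \<beta>"
      using Lset_subset by blast
    finally show ?thesis
      using assms True by (simp add: Ccode_iff)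
  qed (use assms in \<open>simp add: Ccode_iff info_codeword_def words_def\<close>)
  then show "x \<beta> = (\<Sum>\<gamma>\<in>Zvec m r. wscale (x \<gamma>) (info_codeword m r t \<gamma>)) \<beta>"
    by (simp add: sum_fun_apply wscale_def)
qed

lemma independent_info_codewords: "words.independent (info_codeword m r t ` Zvec m r)"
proof (rule words.independent_if_scalars_zero)
  show "finite (info_codeword m r t ` Zvec m r)"
    using finite_Zvec by blast
next
  fix f v
  assume combination: "(\<Sum>w\<in>info_codeword m r t ` Zvec m r. wscale (f w) w) = 0"
    and "v \<in> info_codeword m r t ` Zvec m r"
  then obtain \<gamma> where \<gamma>: "\<gamma> \<in> Zvec m r" "v = info_codeword m r t \<gamma>"
    by blast
  have "0 = (\<Sum>w\<in>info_codeword m r t ` Zvec m r. f w * w \<gamma>)"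
    using fun_cong[OF combination, of \<gamma>] by (simp add: sum_fun_apply wscale_def)
  also have "\<dots> = (\<Sum>\<gamma>'\<in>Zvec m r. if \<gamma>' = \<gamma> then f (info_codeword m r t \<gamma>') else 0)"
    using \<gamma>(1) by (simp add: sum.reindex[OF inj_on_info_codeword] info_codeword_Zvec)
      (auto intro: sum.cong)
  also have "\<dots> = f v"
    using \<gamma> finite_Zvec by simp
  finally show "f v = 0" ..
qed

lemma code_dim_Ccode: "code_dim (Ccode m r t) = r ^ m"
proof -
  have "card (info_codeword m r t ` Zvec m r) = words.dim (Ccode m r t)"
  proof (rule words.basis_card_eq_dim)
    show "info_codeword m r t ` Zvec m r \<subseteq> Ccode m r t"
      using info_codeword_in_Ccode by blast
    show "Ccode m r t \<subseteq> words.span (info_codeword m r t ` Zvec m r)"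
    proof
      fix x assume "x \<in> Ccode m r t"
      then have "x = (\<Sum>\<gamma>\<in>Zvec m r. wscale (x \<gamma>) (info_codeword m r t \<gamma>))"
        by (rule Ccode_eq_info_combination)
      also have "\<dots> \<in> words.span (info_codeword m r t ` Zvec m r)"
        by (intro words.span_sum words.span_scale words.span_base) blast
      finally show "x \<in> words.span (info_codeword m r t ` Zvec m r)" .
    qed
  qed (rule independent_info_codewords)
  then show ?thesis
    by (simp add: code_dim_def card_image[OF inj_on_info_codeword] card_Zvec)
qed

section \<open>Recovery along lines\<close>

definition line :: "nat \<Rightarrow> (nat \<Rightarrow> nat) \<Rightarrow> nat \<Rightarrow> (nat \<Rightarrow> nat) set" where
  "line r \<alpha> d = (\<lambda>j. \<alpha>(d := j)) ` {0..r}"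

definition admissible_dir :: "nat \<Rightarrow> nat \<Rightarrow> nat \<Rightarrow> (nat \<Rightarrow> nat) \<Rightarrow> nat \<Rightarrow> bool" where
  "admissible_dir m r t \<alpha> d \<longleftrightarrow> d \<in> {1..m} \<and> supp_inv (insert d (Uset m r \<alpha>)) \<le> t"

lemma inj_on_fun_upd: "inj_on (\<lambda>j. \<alpha>(d := j)) A"
  by (rule inj_onI) (metis fun_upd_same)

lemma finite_line: "finite (line r \<alpha> d)"
  by (simp add: line_def)

lemma card_line: "card (line r \<alpha> d) = Suc r"
  unfolding line_def by (simp add: card_image[OF inj_on_fun_upd])

lemma Uset_fun_upd: "Uset m r (\<alpha>(d := j)) \<subseteq> insert d (Uset m r \<alpha>)"
  by (auto simp: Uset_def)

lemma fun_upd_in_Omega: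
  assumes "t < 2 ^ m" "\<alpha> \<in> Omega m r t" "admissible_dir m r t \<alpha> d" "j \<le> r"
  shows "\<alpha>(d := j) \<in> Omega m r t"
proof -
  have "supp_inv (Uset m r (\<alpha>(d := j))) \<le> supp_inv (insert d (Uset m r \<alpha>))"
    by (rule supp_inv_mono[OF _ Uset_fun_upd]) (simp add: finite_Uset)
  then show ?thesis
    using assms by (auto simp: Omega_eq_supp_inv_le admissible_dir_def Zvec_def)
qed

lemma line_subset_Omega:
  "t < 2 ^ m \<Longrightarrow> \<alpha> \<in> Omega m r t \<Longrightarrow> admissible_dir m r t \<alpha> d \<Longrightarrow> line r \<alpha> d \<subseteq> Omega m r t"
  unfolding line_def using fun_upd_in_Omega by auto

lemma self_in_line:
  assumes "t < 2 ^ m" "\<alpha> \<in> Omega m r t" "admissible_dir m r t \<alpha> d"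
  shows "\<alpha> \<in> line r \<alpha> d"
proof -
  have "\<alpha> d < r + 1"
    using assms by (simp add: Omega_eq_supp_inv_le admissible_dir_def Zvec_def)
  then show ?thesis
    unfolding line_def by (intro image_eqI[of _ _ "\<alpha> d"]) auto
qed

text \<open>The check at the top point \<alpha>(d := r) of a line is the sum of the checks at its
  other points, because L(\<alpha>(d := r)) is partitioned by the value of the d-th coordinate.\<close>
lemma Lset_fun_upd_top:
  "d \<in> {1..m} \<Longrightarrow> j < r \<Longrightarrow> Lset m r (\<alpha>(d := j)) = {\<delta> \<in> Lset m r (\<alpha>(d := r)). \<delta> d = j}"
  by (auto simp: Lset_def Tset_def)

lemma sum_line_eq_0:
  assumes "t < 2 ^ m" "\<alpha> \<in> Omega m r t" "admissible_dir m r t \<alpha> d" "x \<in> Ccode m r t"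
  shows "(\<Sum>\<beta>\<in>line r \<alpha> d. x \<beta>) = 0"
proof -
  let ?pt = "\<lambda>j. \<alpha>(d := j)"
  have d: "d \<in> {1..m}"
    using assms(3) by (simp add: admissible_dir_def)
  have check: "x (?pt j) = (\<Sum>\<delta>\<in>Lset m r (?pt j). x \<delta>)" if "j \<le> r" for j
    using assms(4) fun_upd_in_Omega[OF assms(1-3) that] by (simp add: Ccode_iff)
  have coordinate_d: "(\<lambda>\<delta>. \<delta> d) ` Lset m r (?pt r) \<subseteq> {..<r}"
    using d Lset_subset by (fastforce simp: Zvec_def)
  have "x (?pt r) = (\<Sum>\<delta>\<in>Lset m r (?pt r). x \<delta>)"
    by (rule check) simp
  also have "\<dots> = (\<Sum>j<r. \<Sum>\<delta>\<in>{\<delta> \<in> Lset m r (?pt r). \<delta> d = j}. x \<delta>)"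
    by (rule sum.group[symmetric, OF finite_Lset _ coordinate_d]) simp
  also have "\<dots> = (\<Sum>j<r. x (?pt j))"
    using check Lset_fun_upd_top[OF d] by (intro sum.cong) simp_all
  finally have "x (?pt r) + (\<Sum>j<r. x (?pt j)) = 0"
    by (simp add: bit_eq_iff_add_eq_0[symmetric])
  moreover have "(\<Sum>\<beta>\<in>line r \<alpha> d. x \<beta>) = x (?pt r) + (\<Sum>j<r. x (?pt j))"
    unfolding line_def sum.reindex[OF inj_on_fun_upd] atLeast0AtMost lessThan_Suc_atMost[symmetric]
    by simp
  ultimately show ?thesis
    by simp
qed

lemma recovering_set_line:
  assumes "t < 2 ^ m" "\<alpha> \<in> Omega m r t" "admissible_dir m r t \<alpha> d"
  shows "recovering_set (Omega m r t) (Ccode m r t) \<alpha> (line r \<alpha> d - {\<alpha>})"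
proof -
  have "x \<alpha> = (\<Sum>\<beta>\<in>line r \<alpha> d - {\<alpha>}. 1 * x \<beta>)" if "x \<in> Ccode m r t" for x
    using sum_line_eq_0[OF assms that] sum.remove[OF finite_line self_in_line[OF assms], of x]
    by (simp add: bit_eq_iff_add_eq_0[of "x \<alpha>"])
  then show ?thesis
    unfolding recovering_set_def using line_subset_Omega[OF assms]
    by (intro conjI exI[of _ "\<lambda>_. 1"]) auto
qed

lemma card_line_minus_self:
  "t < 2 ^ m \<Longrightarrow> \<alpha> \<in> Omega m r t \<Longrightarrow> admissible_dir m r t \<alpha> d \<Longrightarrow> card (line r \<alpha> d - {\<alpha>}) = r"
  using self_in_line card_line finite_line by simp

section \<open>Every small erasure pattern has an isolated line\<close>

definition no_isolated_line :: "nat \<Rightarrow> nat \<Rightarrow> nat \<Rightarrow> (nat \<Rightarrow> nat) set \<Rightarrow> bool" where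
  "no_isolated_line m r t E \<longleftrightarrow>
     (\<forall>\<alpha>\<in>E. \<forall>d. admissible_dir m r t \<alpha> d \<longrightarrow> (\<exists>\<beta>\<in>E. \<beta> \<in> line r \<alpha> d \<and> \<beta> \<noteq> \<alpha>))"

lemma Uset_empty_if_minimal:
  assumes "t < 2 ^ m" "E \<subseteq> Omega m r t" "no_isolated_line m r t E" "\<alpha>\<^sub>0 \<in> E"
    and minimal: "\<And>\<beta>. \<beta> \<in> E \<Longrightarrow> supp_inv (Uset m r \<alpha>\<^sub>0) \<le> supp_inv (Uset m r \<beta>)"
  shows "Uset m r \<alpha>\<^sub>0 = {}"
proof (rule ccontr)
  assume "Uset m r \<alpha>\<^sub>0 \<noteq> {}"
  then obtain d where dU: "d \<in> Uset m r \<alpha>\<^sub>0"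
    by blast
  then have "admissible_dir m r t \<alpha>\<^sub>0 d"
    using assms(1,2,4) Uset_subset[of m r \<alpha>\<^sub>0]
    by (auto simp: admissible_dir_def Omega_eq_supp_inv_le insert_absorb)
  then obtain j where "\<alpha>\<^sub>0(d := j) \<in> E" "\<alpha>\<^sub>0(d := j) \<noteq> \<alpha>\<^sub>0"
    using assms(3,4) by (auto simp: no_isolated_line_def line_def)
  moreover from this have "Uset m r (\<alpha>\<^sub>0(d := j)) = Uset m r \<alpha>\<^sub>0 - {d}"
    using dU by (auto simp: Uset_def)
  then have "supp_inv (Uset m r \<alpha>\<^sub>0) = 2 ^ (d - 1) + supp_inv (Uset m r (\<alpha>\<^sub>0(d := j)))"
    using dU finite_Uset supp_inv_insert[of "Uset m r \<alpha>\<^sub>0 - {d}" d] by (simp add: insert_absorb)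
  ultimately show False
    using minimal by fastforce
qed

lemma exists_in_erasures_with_diff_set:
  assumes "no_isolated_line m r t E" "\<alpha>\<^sub>0 \<in> E" "Uset m r \<alpha>\<^sub>0 = {}"
    and "finite S" "S \<subseteq> {1..m}" "supp_inv S \<le> t"
  shows "\<exists>\<beta>\<in>E. {l. \<beta> l \<noteq> \<alpha>\<^sub>0 l} = S \<and> Uset m r \<beta> \<subseteq> S"
  using assms(4-6)
proof (induction S rule: finite_induct)
  case empty
  show ?case
    using assms(2,3) by (intro bexI[of _ \<alpha>\<^sub>0]) auto
next
  case (insert d S)
  have "supp_inv S \<le> supp_inv (insert d S)"
    using insert.hyps by (intro supp_inv_mono) auto
  then obtain \<beta> where \<beta>: "\<beta> \<in> E" "{l. \<beta> l \<noteq> \<alpha>\<^sub>0 l} = S" "Uset m r \<beta> \<subseteq> S"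
    using insert by auto
  have "supp_inv (insert d (Uset m r \<beta>)) \<le> supp_inv (insert d S)"
    using \<beta>(3) insert.hyps by (intro supp_inv_mono) auto
  then have "admissible_dir m r t \<beta> d"
    using insert.prems by (simp add: admissible_dir_def)
  then obtain j where j: "\<beta>(d := j) \<in> E" "j \<noteq> \<beta> d"
    using assms(1) \<beta>(1) by (auto simp: no_isolated_line_def line_def)
  have "{l. (\<beta>(d := j)) l \<noteq> \<alpha>\<^sub>0 l} = insert d S"
    using j(2) \<beta>(2) insert.hyps(2) by auto
  moreover have "Uset m r (\<beta>(d := j)) \<subseteq> insert d S"
    using Uset_fun_upd[of m r \<beta> d j] \<beta>(3) by auto
  ultimately show ?case
    using j(1) by blast
qed

lemma card_gt_if_no_isolated_line:
  assumes tm: "t < 2 ^ m" and "E \<subseteq> Omega m r t" "E \<noteq> {}" "no_isolated_line m r t E"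
  shows "t < card E"
proof -
  have finite_E: "finite E"
    using assms(2) finite_Omega finite_subset by blast
  obtain \<alpha>\<^sub>0 where \<alpha>\<^sub>0: "\<alpha>\<^sub>0 \<in> E"
    and minimal: "\<And>\<beta>. \<beta> \<in> E \<Longrightarrow> supp_inv (Uset m r \<alpha>\<^sub>0) \<le> supp_inv (Uset m r \<beta>)"
    using ex_has_least_nat[of "\<lambda>\<beta>. \<beta> \<in> E" _ "\<lambda>\<beta>. supp_inv (Uset m r \<beta>)"] assms(3) by blast
  have U\<alpha>\<^sub>0: "Uset m r \<alpha>\<^sub>0 = {}"
    by (rule Uset_empty_if_minimal[OF assms(1,2,4) \<alpha>\<^sub>0 minimal])
  let ?diff = "\<lambda>\<beta>. {l. \<beta> l \<noteq> \<alpha>\<^sub>0 l}"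
  have "supp m ` {0..t} \<subseteq> ?diff ` E"
  proof
    fix S assume "S \<in> supp m ` {0..t}"
    then obtain s where "s \<le> t" "S = supp m s"
      by auto
    then have "supp_inv S \<le> t" "S \<subseteq> {1..m}" "finite S"
      using tm supp_inv_supp[of s m] supp_subset finite_supp by auto
    then show "S \<in> ?diff ` E"
      using exists_in_erasures_with_diff_set[OF assms(4) \<alpha>\<^sub>0 U\<alpha>\<^sub>0] by blast
  qed
  moreover have "inj_on (supp m) {0..t}"
    using inj_on_supp by (rule inj_on_subset) (use tm in auto)
  ultimately have "card {0..t} \<le> card (?diff ` E)"
    using finite_E card_mono[of "?diff ` E" "supp m ` {0..t}"] by (simp add: card_image)
  also have "\<dots> \<le> card E"
    using finite_E by (rule card_image_le)
  finally show ?thesis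
    by simp
qed

lemma erasure_with_recovering_line:
  assumes "t < 2 ^ m" "E \<subseteq> Omega m r t" "E \<noteq> {}" "card E \<le> t"
  shows "\<exists>\<alpha>\<in>E. \<exists>R. recovering_set (Omega m r t) (Ccode m r t) \<alpha> R \<and>
           R \<subseteq> Omega m r t - E \<and> card R \<le> r"
proof -
  obtain \<alpha> d where \<alpha>: "\<alpha> \<in> E" "admissible_dir m r t \<alpha> d"
    and "line r \<alpha> d \<inter> E = {\<alpha>}"
    using card_gt_if_no_isolated_line[OF assms(1-3)] assms(4) self_in_line[OF assms(1)] assms(2)
    unfolding no_isolated_line_def by fastforce
  then have "line r \<alpha> d - {\<alpha>} \<subseteq> Omega m r t - E"
    using line_subset_Omega[OF assms(1)] assms(2) by blast
  moreover have "\<alpha> \<in> Omega m r t"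
    using \<alpha>(1) assms(2) by blast
  ultimately show ?thesis
    using \<alpha> recovering_set_line[OF assms(1)] card_line_minus_self[OF assms(1)]
    by (intro bexI[of _ \<alpha>] exI[of _ "line r \<alpha> d - {\<alpha>}"]) auto
qed

lemma sequential_recovery_by_peeling:
  assumes "finite I"
    and peel: "\<And>E. E \<subseteq> I \<Longrightarrow> E \<noteq> {} \<Longrightarrow> card E \<le> t \<Longrightarrow>
                 \<exists>i\<in>E. \<exists>R. recovering_set I C i R \<and> R \<subseteq> I - E \<and> card R \<le> r"
    and "E \<subseteq> I" "card E \<le> t"
  shows "\<exists>e. distinct e \<and> set e = E \<and>
           (\<forall>l < length e. \<exists>R. recovering_set I C (e ! l) R \<and>
              R \<subseteq> (I - E) \<union> set (take l e) \<and> card R \<le> r)"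
  using assms(3,4)
proof (induction "card E" arbitrary: E)
  case 0
  then have "E = {}"
    using \<open>finite I\<close> finite_subset by fastforce
  then show ?case
    by (intro exI[of _ "[]"]) simp
next
  case (Suc k)
  have "finite E"
    using Suc.prems \<open>finite I\<close> finite_subset by blast
  then obtain i R where i: "i \<in> E" "recovering_set I C i R" "R \<subseteq> I - E" "card R \<le> r"
    using peel[OF Suc.prems(1) _ Suc.prems(2)] Suc.hyps(2) by force
  obtain e where e: "distinct e" "set e = E - {i}"
    "\<forall>l < length e. \<exists>R. recovering_set I C (e ! l) R \<and>
       R \<subseteq> (I - (E - {i})) \<union> set (take l e) \<and> card R \<le> r"
    using Suc.hyps(1)[of "E - {i}"] Suc.hyps(2) Suc.prems card_Diff_singleton[OF i(1)] by force
  have "\<exists>R. recovering_set I C ((i # e) ! l) R \<and> R \<subseteq> (I - E) \<union> set (take l (i # e)) \<and> card R \<le> r"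
    if "l < length (i # e)" for l
  proof (cases l)
    case 0
    then show ?thesis
      using i by auto
  next
    case (Suc l')
    then show ?thesis
      using e(3) that i(1) Suc.prems(1) by fastforce
  qed
  then show ?case
    using e i(1) by (intro exI[of _ "i # e"]) auto
qed

theorem theorem2:
  fixes r t m :: nat
  assumes "r \<ge> 2" and "t \<ge> 1" and "m \<ge> 1" and "t \<le> 2 ^ m - 1"
  shows "\<exists>n. real n = real r ^ m * (\<Sum>s=0..t. 1 / real r ^ card (supp m s)) \<and>
             is_SLRC (Omega m r t) (Ccode m r t) n (r ^ m) r t \<and>
             real (r ^ m) / real n = inverse (\<Sum>s=0..t. 1 / real r ^ card (supp m s))"
proof -
  have tm: "t < 2 ^ m"
    using assms(4) one_le_power[of "2::nat" m] by linarith
  define n where "n = (\<Sum>s=0..t. r ^ (m - card (supp m s)))"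
  have "real r \<noteq> 0"
    using assms(1) by simp
  then have "real (r ^ (m - card (supp m s))) = real r ^ m * (1 / real r ^ card (supp m s))" for s
    using power_diff[OF \<open>real r \<noteq> 0\<close> card_mono[OF finite_atLeastAtMost supp_subset]] by simp
  then have n_eq: "real n = real r ^ m * (\<Sum>s=0..t. 1 / real r ^ card (supp m s))"
    unfolding n_def of_nat_sum by (simp add: sum_distrib_left)
  have "is_SLRC (Omega m r t) (Ccode m r t) n (r ^ m) r t"
    unfolding is_SLRC_def linear_code_def n_def
    using finite_Omega Ccode_subspace card_Omega[OF tm] code_dim_Ccode
      sequential_recovery_by_peeling[OF finite_Omega erasure_with_recovering_line[OF tm]]
    by (auto simp: Ccode_def)
  moreover have "real (r ^ m) / real n = inverse (\<Sum>s=0..t. 1 / real r ^ card (supp m s))"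
    using \<open>real r \<noteq> 0\<close> unfolding n_eq by (simp add: field_simps)
  ultimately show ?thesis
    using n_eq by blast
qed

end
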